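(* Let $M\geq 1$ and let $r$ be a DSIC mechanism in the bilateral cooperation model described in the context, with competitive ratio $\alpha$. For $d\in\{1,\dots,M\}$ let $B^d$ be the set of vectors $b\in\mathbb{R}^M$ with $b_i=1$ for $i\in\{1,\dots,d\}$ and $b_i\leq 0$ for $i\in\{d+1,\dots,M\}$. For $\varepsilon\in(0,1)$ let $s^\varepsilon\in\mathbb{R}^M$ be given by $s^\varepsilon_i=\varepsilon^{M-i}$. Then for every $d\in\{1,\dots,M\}$, every $b\in B^d$ and every $\varepsilon\in(0,1)$: $$\sum_{i=1}^d r_i(b,s^\varepsilon)\ \geq\ d\cdot(\alpha-2\varepsilon).$$
   Context: Bilateral cooperation model: there are two agents, a buyer and a seller, and options $0,1,\dots,M$. A buyer utility vector is $b=(b_1,\dots,b_M)\in\mathbb{R}^M$ and a seller utility vector is $s=(s_1,\dots,s_M)\in\mathbb{R}^M$ (entries may be positive, zero or negative); by convention $b_0=s_0=0$. Define $\mathrm{Feasible}(b,s)=\{i\in\{0,\dots,M\}: b_i\geq 0 \text{ and } s_i\geq 0\}$ and $OPT(b,s)=\max_{i\in \mathrm{Feasible}(b,s)}(b_i+s_i)$. A mechanism is a function $r$ mapping each pair of reported vectors $(b',s')$ to a probability vector $(r_0(b',s'),\dots,r_M(b',s'))$. The mechanism $r$ is DSIC if for all $b,b',s,s'\in\mathbb{R}^M$: $\sum_{i=1}^M r_i(b,s')\,b_i\geq \sum_{i=1}^M r_i(b',s')\,b_i$ and $\sum_{i=1}^M r_i(b',s)\,s_i\geq \sum_{i=1}^M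 r_i(b',s')\,s_i$. The gain at true vectors $(b,s)$ is $G_r(b,s)=\sum_{i=1}^M r_i(b,s)(b_i+s_i)$, and the competitive ratio is $C_r=\min_{b,s} G_r(b,s)/OPT(b,s)$; "competitive ratio $\alpha$" means $C_r=\alpha$. *)

theory Defs
  imports Complex_Main
begin

text \<open>Vectors in R^M are represented as functions nat => real indexed by 1..M,
  with value 0 outside 1..M (in particular at index 0, matching b_0 = s_0 = 0).\<close>
definition vecs :: "nat \<Rightarrow> (nat \<Rightarrow> real) set" where
  "vecs M = {v. \<forall>i. i \<notin> {1..M} \<longrightarrow> v i = 0}"

definition Feasible :: "nat \<Rightarrow> (nat \<Rightarrow> real) \<Rightarrow> (nat \<Rightarrow> real) \<Rightarrow> nat set" where
  "Feasible M b s = {i \<in> {0..M}. b i \<ge> 0 \<and> s i \<ge> 0}"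

definition OPT :: "nat \<Rightarrow> (nat \<Rightarrow> real) \<Rightarrow> (nat \<Rightarrow> real) \<Rightarrow> real" where
  "OPT M b s = Max ((\<lambda>i. b i + s i) ` Feasible M b s)"

type_synonym mechanism = "(nat \<Rightarrow> real) \<Rightarrow> (nat \<Rightarrow> real) \<Rightarrow> nat \<Rightarrow> real"

definition is_mechanism :: "nat \<Rightarrow> mechanism \<Rightarrow> bool" where
  "is_mechanism M r \<longleftrightarrow> (\<forall>b\<in>vecs M. \<forall>s\<in>vecs M.
      (\<forall>i\<in>{0..M}. r b s i \<ge> 0) \<and> (\<Sum>i=0..M. r b s i) = 1)"

definition DSIC :: "nat \<Rightarrow> mechanism \<Rightarrow> bool" where
  "DSIC M r \<longleftrightarrow> (\<forall>b\<in>vecs M. \<forall>b'\<in>vecs M. \<forall>s\<in>vecs M. \<forall>s'\<in>vecs M.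
      (\<Sum>i=1..M. r b s' i * b i) \<ge> (\<Sum>i=1..M. r b' s' i * b i) \<and>
      (\<Sum>i=1..M. r b' s i * s i) \<ge> (\<Sum>i=1..M. r b' s' i * s i))"

definition gain :: "nat \<Rightarrow> mechanism \<Rightarrow> (nat \<Rightarrow> real) \<Rightarrow> (nat \<Rightarrow> real) \<Rightarrow> real" where
  "gain M r b s = (\<Sum>i=1..M. r b s i * (b i + s i))"

text \<open>C_r is the infimum of G_r(b,s)/OPT(b,s) over all true vectors with OPT(b,s) > 0
  (the ratio is undefined when OPT = 0); "competitive ratio alpha" means C_r = alpha,
  i.e. alpha is the greatest lower bound of these ratios.\<close>
definition competitive_ratio :: "nat \<Rightarrow> mechanism \<Rightarrow> real \<Rightarrow> bool" where
  "competitive_ratio M r \<alpha> \<longleftrightarrow>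
     (\<forall>b\<in>vecs M. \<forall>s\<in>vecs M. OPT M b s > 0 \<longrightarrow> \<alpha> \<le> gain M r b s / OPT M b s) \<and>
     (\<forall>\<beta>. (\<forall>b\<in>vecs M. \<forall>s\<in>vecs M. OPT M b s > 0 \<longrightarrow> \<beta> \<le> gain M r b s / OPT M b s)
            \<longrightarrow> \<beta> \<le> \<alpha>)"

definition Bd :: "nat \<Rightarrow> nat \<Rightarrow> (nat \<Rightarrow> real) set" where
  "Bd M d = {b \<in> vecs M. (\<forall>i\<in>{1..d}. b i = 1) \<and> (\<forall>i\<in>{d+1..M}. b i \<le> 0)}"

definition s_eps :: "nat \<Rightarrow> real \<Rightarrow> nat \<Rightarrow> real" where
  "s_eps M \<epsilon> i = (if i \<in> {1..M} then \<epsilon> ^ (M - i) else 0)"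

end

theory Submission
  imports Defs
begin

text \<open>For \<open>b \<in> B\<^sup>d\<close> let \<open>c\<close> be the buyer who values
  options \<open>1..d-1\<close> at 1, option \<open>d\<close> at 0 and all later options at a huge negative \<open>-L\<close>.
  Buyer DSIC gives \<open>V(b) \<ge> V(c) + r\<^sub>d(c,s\<^sup>\<epsilon>)\<close> for the buyer values \<open>V\<close>, and \<open>c \<in> B\<^sup>d\<^sup>-\<^sup>1\<close>,
  so the claim follows by induction once \<open>r\<^sub>d(c,s\<^sup>\<epsilon>) \<ge> \<alpha> - 3\<epsilon>/2\<close>.
  For that, if the seller reported instead that only option \<open>d\<close> is acceptable, the
  competitive ratio would force mass \<open>\<ge> \<alpha>\<close> on \<open>d\<close>; seller DSIC turns this into
  seller value \<open>\<ge> \<alpha> \<epsilon>\<^sup>M\<^sup>-\<^sup>d\<close> at \<open>(c,s\<^sup>\<epsilon>)\<close>. Options before \<open>d\<close> are worth at most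
  \<open>\<epsilon>\<^sup>M\<^sup>-\<^sup>d\<^sup>+\<^sup>1\<close> to the seller, and options after \<open>d\<close> get tiny mass because \<open>-L\<close> would
  otherwise destroy the gain; hence most of the seller value must come from option \<open>d\<close>.\<close>

definition buyer_value :: "nat \<Rightarrow> mechanism \<Rightarrow> (nat \<Rightarrow> real) \<Rightarrow> (nat \<Rightarrow> real) \<Rightarrow> real" where
  "buyer_value M r b s = (\<Sum>i=1..M. r b s i * b i)"

definition seller_value :: "nat \<Rightarrow> mechanism \<Rightarrow> (nat \<Rightarrow> real) \<Rightarrow> (nat \<Rightarrow> real) \<Rightarrow> real" where
  "seller_value M r b s = (\<Sum>i=1..M. r b s i * s i)"

definition cut_buyer :: "nat \<Rightarrow> nat \<Rightarrow> real \<Rightarrow> nat \<Rightarrow> real" where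
  "cut_buyer M d L i = (if i \<in> {1..M} then if i < d then 1 else if i = d then 0 else - L else 0)"

definition point_seller :: "nat \<Rightarrow> nat \<Rightarrow> nat \<Rightarrow> real" where
  "point_seller M d i = (if i \<in> {1..M} then if i = d then 1 else - 2 else 0)"

lemma gain_eq_buyer_value_plus_seller_value:
  "gain M r b s = buyer_value M r b s + seller_value M r b s"
  unfolding gain_def buyer_value_def seller_value_def
  by (simp add: sum.distrib distrib_left)

lemma sum_split_at:
  fixes f :: "nat \<Rightarrow> 'a::comm_monoid_add"
  assumes "d \<in> {1..M}"
  shows "(\<Sum>i=1..M. f i) = (\<Sum>i=1..<d. f i) + f d + (\<Sum>i\<in>{d<..M}. f i)"
proof -
  have "{1..M} = insert d ({1..<d} \<union> {d<..M})" using assms by auto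
  moreover have "sum f ({1..<d} \<union> {d<..M}) = sum f {1..<d} + sum f {d<..M}"
    by (rule sum.union_disjoint) auto
  ultimately show ?thesis by (simp add: ac_simps)
qed

lemma OPT_ge:
  assumes "i \<le> M" "b i \<ge> 0" "s i \<ge> 0"
  shows "b i + s i \<le> OPT M b s"
proof -
  have "finite (Feasible M b s)" "i \<in> Feasible M b s"
    using assms unfolding Feasible_def by auto
  then show ?thesis unfolding OPT_def by (intro Max_ge) auto
qed

lemma competitive_ratio_gain_ge:
  assumes "competitive_ratio M r \<alpha>" "b \<in> vecs M" "s \<in> vecs M" "OPT M b s > 0"
  shows "\<alpha> * OPT M b s \<le> gain M r b s"
proof -
  have "\<alpha> \<le> gain M r b s / OPT M b s" using assms unfolding competitive_ratio_def by blast
  then show ?thesis using assms(4) by (simp add: pos_le_divide_eq)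
qed

lemma mechanism_nonneg:
  assumes "is_mechanism M r" "b \<in> vecs M" "s \<in> vecs M" "i \<le> M"
  shows "0 \<le> r b s i"
  using assms unfolding is_mechanism_def by auto

lemma mechanism_sum_le_one:
  assumes "is_mechanism M r" "b \<in> vecs M" "s \<in> vecs M"
  shows "(\<Sum>i=1..M. r b s i) \<le> 1"
proof -
  have "(\<Sum>i=0..M. r b s i) = r b s 0 + (\<Sum>i=1..M. r b s i)"
    by (simp add: sum.atLeast_Suc_atMost)
  moreover have "(\<Sum>i=0..M. r b s i) = 1" using assms unfolding is_mechanism_def by blast
  ultimately show ?thesis using mechanism_nonneg[OF assms, of 0] by simp
qed

lemma vecs_large_lower_bound:
  assumes "b \<in> vecs M" "0 < \<mu>"
  shows "\<exists>L. 1 \<le> L \<and> c \<le> L * \<mu> \<and> (\<forall>i. - L \<le> b i)"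
proof -
  define L where "L = max 1 (max (\<Sum>j=1..M. \<bar>b j\<bar>) (c / \<mu>))"
  have "- L \<le> b i" for i
  proof (cases "i \<in> {1..M}")
    case True
    then have "\<bar>b i\<bar> \<le> (\<Sum>j=1..M. \<bar>b j\<bar>)" by (intro member_le_sum) auto
    then show ?thesis unfolding L_def by linarith
  next
    case False
    then show ?thesis using assms unfolding vecs_def L_def by simp
  qed
  moreover have "c \<le> L * \<mu>"
    using assms(2) mult_right_mono[of "c / \<mu>" L \<mu>] unfolding L_def by simp
  moreover have "1 \<le> L" unfolding L_def by simp
  ultimately show ?thesis by blast
qed

lemma s_eps_in_vecs: "s_eps M \<epsilon> \<in> vecs M"
  unfolding vecs_def s_eps_def by auto

lemma s_eps_pos: "0 < \<epsilon> \<Longrightarrow> i \<in> {1..M} \<Longrightarrow> 0 < s_eps M \<epsilon> i"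
  by (simp add: s_eps_def)

lemma s_eps_le_one: "0 < \<epsilon> \<Longrightarrow> \<epsilon> \<le> 1 \<Longrightarrow> s_eps M \<epsilon> i \<le> 1"
  by (simp add: s_eps_def power_le_one)

lemma s_eps_before:
  assumes "0 < \<epsilon>" "\<epsilon> \<le> 1" "1 \<le> i" "i < d" "d \<le> M"
  shows "s_eps M \<epsilon> i \<le> \<epsilon> * s_eps M \<epsilon> d"
proof -
  have "\<epsilon> ^ (M - i) \<le> \<epsilon> ^ Suc (M - d)"
    using assms by (intro power_decreasing) auto
  then show ?thesis using assms by (simp add: s_eps_def)
qed

lemma seller_value_s_eps_le:
  assumes "0 < \<epsilon>" "\<epsilon> < 1" "d \<in> {1..M}" "\<forall>i\<in>{1..M}. 0 \<le> w i"
  shows "(\<Sum>i=1..M. w i * s_eps M \<epsilon> i)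
    \<le> \<epsilon> * s_eps M \<epsilon> d * (\<Sum>i=1..<d. w i) + s_eps M \<epsilon> d * w d + (\<Sum>i\<in>{d<..M}. w i)"
proof -
  have "(\<Sum>i=1..<d. w i * s_eps M \<epsilon> i) \<le> (\<Sum>i=1..<d. \<epsilon> * s_eps M \<epsilon> d * w i)"
    using assms s_eps_before[of \<epsilon>] by (intro sum_mono) (auto simp: mult_left_mono mult.commute)
  moreover have "(\<Sum>i\<in>{d<..M}. w i * s_eps M \<epsilon> i) \<le> (\<Sum>i\<in>{d<..M}. w i)"
    using assms s_eps_le_one[of \<epsilon>] by (intro sum_mono) (auto simp: mult_left_le)
  ultimately show ?thesis
    using sum_split_at[OF assms(3), of "\<lambda>i. w i * s_eps M \<epsilon> i"]
    by (simp add: sum_distrib_left mult.commute)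
qed

lemma cut_buyer_in_vecs: "cut_buyer M d L \<in> vecs M"
  unfolding vecs_def cut_buyer_def by auto

lemma cut_buyer_in_Bd:
  assumes "d \<in> {1..M}" "1 \<le> L"
  shows "cut_buyer M d L \<in> Bd M (d - 1)"
  using assms unfolding Bd_def vecs_def cut_buyer_def by auto

lemma point_seller_in_vecs: "point_seller M d \<in> vecs M"
  unfolding vecs_def point_seller_def by auto

lemma buyer_value_le_mass:
  assumes "is_mechanism M r" and d: "d \<in> {1..M}" and b: "b \<in> Bd M d" and s: "s \<in> vecs M"
  shows "buyer_value M r b s \<le> (\<Sum>i=1..d. r b s i)"
proof -
  have bvec: "b \<in> vecs M" using b unfolding Bd_def by auto
  have "buyer_value M r b s \<le> (\<Sum>i=1..M. if i \<le> d then r b s i else 0)"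
    unfolding buyer_value_def
  proof (rule sum_mono)
    fix i assume i: "i \<in> {1..M}"
    have "0 \<le> r b s i" using mechanism_nonneg[OF assms(1) bvec s] i by auto
    moreover have "d < i \<Longrightarrow> b i \<le> 0" using b i unfolding Bd_def by auto
    ultimately show "r b s i * b i \<le> (if i \<le> d then r b s i else 0)"
      using b i unfolding Bd_def by (auto simp: mult_nonneg_nonpos)
  qed
  also have "\<dots> = (\<Sum>i\<in>{1..M} \<inter> {i. i \<le> d}. r b s i)"
    by (simp add: sum.inter_restrict)
  also have "{1..M} \<inter> {i. i \<le> d} = {1..d}" using d by auto
  finally show ?thesis .
qed

context
  fixes M :: nat and r :: mechanism and \<alpha> :: real
  assumes mech: "is_mechanism M r"
    and dsic: "DSIC M r"
    and cr: "competitive_ratio M r \<alpha>"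
begin

lemma buyer_value_ge_misreport:
  "b \<in> vecs M \<Longrightarrow> b' \<in> vecs M \<Longrightarrow> s \<in> vecs M \<Longrightarrow>
    (\<Sum>i=1..M. r b' s i * b i) \<le> buyer_value M r b s"
  using dsic unfolding DSIC_def buyer_value_def by blast

lemma seller_value_ge_misreport:
  "b \<in> vecs M \<Longrightarrow> s \<in> vecs M \<Longrightarrow> s' \<in> vecs M \<Longrightarrow>
    (\<Sum>i=1..M. r b s' i * s i) \<le> seller_value M r b s"
  using dsic unfolding DSIC_def seller_value_def by blast

text \<open>At \<open>(c, point_seller M d)\<close> option \<open>d\<close> is the only one with positive total
  value, and it has value 1 = OPT.\<close>
lemma point_seller_mass:
  assumes c: "c \<in> vecs M" "c d = 0" "\<forall>i\<in>{1..M}. c i \<le> 2" and d: "d \<in> {1..M}" and "0 \<le> \<alpha>"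
  shows "\<alpha> \<le> r c (point_seller M d) d"
proof -
  let ?s = "point_seller M d"
  have opt: "1 \<le> OPT M c ?s"
    using OPT_ge[of d M c ?s] c d unfolding point_seller_def by auto
  have "gain M r c ?s \<le> (\<Sum>i=1..M. if i = d then r c ?s i else 0)"
    unfolding gain_def
  proof (rule sum_mono)
    fix i assume i: "i \<in> {1..M}"
    have "0 \<le> r c ?s i" using mechanism_nonneg[OF mech c(1) point_seller_in_vecs] i by auto
    moreover have "i \<noteq> d \<Longrightarrow> c i + ?s i \<le> 0" using c i unfolding point_seller_def by auto
    ultimately show "r c ?s i * (c i + ?s i) \<le> (if i = d then r c ?s i else 0)"
      using c i unfolding point_seller_def by (auto simp: mult_nonneg_nonpos)
  qed
  also have "\<dots> = r c ?s d" using d by simp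
  finally have "gain M r c ?s \<le> r c ?s d" .
  moreover have "\<alpha> \<le> \<alpha> * OPT M c ?s" using opt \<open>0 \<le> \<alpha>\<close> by (simp add: mult_le_cancel_left1)
  moreover have "\<alpha> * OPT M c ?s \<le> gain M r c ?s"
    using competitive_ratio_gain_ge[OF cr c(1) point_seller_in_vecs] opt by auto
  ultimately show ?thesis by linarith
qed

lemma seller_value_ge_point_mass:
  assumes c: "c \<in> vecs M" "c d = 0" "\<forall>i\<in>{1..M}. c i \<le> 2" and d: "d \<in> {1..M}" and "0 \<le> \<alpha>"
    and s: "s \<in> vecs M" "\<forall>i\<in>{1..M}. 0 \<le> s i"
  shows "\<alpha> * s d \<le> seller_value M r c s"
proof -
  let ?R = "r c (point_seller M d)"
  have "\<alpha> * s d \<le> ?R d * s d"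
    using point_seller_mass[OF c d \<open>0 \<le> \<alpha>\<close>] s d by (intro mult_right_mono) auto
  also have "\<dots> = (\<Sum>i=1..M. if i = d then ?R i * s i else 0)" using d by simp
  also have "\<dots> \<le> (\<Sum>i=1..M. ?R i * s i)"
    using mechanism_nonneg[OF mech c(1) point_seller_in_vecs] s by (intro sum_mono) auto
  also have "\<dots> \<le> seller_value M r c s"
    using seller_value_ge_misreport[OF c(1) s(1) point_seller_in_vecs] .
  finally show ?thesis .
qed

lemma cut_buyer_tail_mass:
  assumes d: "d \<in> {1..M}" and "0 \<le> \<alpha>" and s: "s \<in> vecs M" "\<forall>i\<in>{1..M}. 0 \<le> s i \<and> s i \<le> 1"
    "0 < s d"
  shows "L * (\<Sum>i\<in>{d<..M}. r (cut_buyer M d L) s i) \<le> 2"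
proof -
  let ?c = "cut_buyer M d L" let ?R = "r ?c s"
  have R0: "\<And>i. i \<le> M \<Longrightarrow> 0 \<le> ?R i" using mechanism_nonneg[OF mech cut_buyer_in_vecs s(1)] by auto
  have opt: "0 < OPT M ?c s" using OPT_ge[of d M ?c s] s d unfolding cut_buyer_def by auto
  then have "0 \<le> \<alpha> * OPT M ?c s" using \<open>0 \<le> \<alpha>\<close> by simp
  also have "\<dots> \<le> gain M r ?c s" using competitive_ratio_gain_ge[OF cr cut_buyer_in_vecs s(1) opt] .
  also have "\<dots> \<le> (\<Sum>i=1..M. 2 * ?R i - L * (if d < i then ?R i else 0))"
    unfolding gain_def
  proof (rule sum_mono)
    fix i assume i: "i \<in> {1..M}"
    have "s i \<le> 1" using s i by auto
    then have "?c i + s i \<le> (if d < i then 2 - L else 2)" using i unfolding cut_buyer_def by auto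
    then have "?R i * (?c i + s i) \<le> ?R i * (if d < i then 2 - L else 2)"
      using R0 i by (intro mult_left_mono) auto
    then show "?R i * (?c i + s i) \<le> 2 * ?R i - L * (if d < i then ?R i else 0)"
      by (simp add: algebra_simps split: if_splits)
  qed
  also have "\<dots> = 2 * (\<Sum>i=1..M. ?R i) - L * (\<Sum>i\<in>{1..M} \<inter> {i. d < i}. ?R i)"
    by (simp add: sum_subtractf sum_distrib_left sum.inter_restrict)
  also have "{1..M} \<inter> {i. d < i} = {d<..M}" using d by auto
  finally show ?thesis using mechanism_sum_le_one[OF mech cut_buyer_in_vecs[of M d L] s(1)] by linarith
qed

lemma cut_buyer_tail_small:
  assumes e: "0 < \<epsilon>" "\<epsilon> < 1" and d: "d \<in> {1..M}" and "0 \<le> \<alpha>"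
    and L: "4 \<le> L * (\<epsilon> * s_eps M \<epsilon> d)"
  shows "(\<Sum>i\<in>{d<..M}. r (cut_buyer M d L) (s_eps M \<epsilon>) i) \<le> \<epsilon> * s_eps M \<epsilon> d / 2"
proof -
  let ?T = "\<Sum>i\<in>{d<..M}. r (cut_buyer M d L) (s_eps M \<epsilon>) i"
  have "0 \<le> ?T" using mechanism_nonneg[OF mech cut_buyer_in_vecs s_eps_in_vecs] by (intro sum_nonneg) auto
  moreover have "L * ?T \<le> 2"
  proof (rule cut_buyer_tail_mass[OF d \<open>0 \<le> \<alpha>\<close> s_eps_in_vecs])
    show "\<forall>i\<in>{1..M}. 0 \<le> s_eps M \<epsilon> i \<and> s_eps M \<epsilon> i \<le> 1"
      using s_eps_pos[OF e(1)] s_eps_le_one[of \<epsilon> M] e by (auto intro: less_imp_le)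
    show "0 < s_eps M \<epsilon> d" using s_eps_pos[OF e(1) d] .
  qed
  ultimately have "?T * 4 \<le> (L * ?T) * (\<epsilon> * s_eps M \<epsilon> d)"
    using mult_left_mono[OF L, of ?T] by (simp add: ac_simps)
  also have "\<dots> \<le> 2 * (\<epsilon> * s_eps M \<epsilon> d)"
    using \<open>L * ?T \<le> 2\<close> s_eps_pos[OF e(1) d] e by (intro mult_right_mono) auto
  finally show ?thesis by simp
qed

lemma cut_buyer_mass_at_cut:
  assumes e: "0 < \<epsilon>" "\<epsilon> < 1" and d: "d \<in> {1..M}" and "0 \<le> \<alpha>"
    and L: "4 \<le> L * (\<epsilon> * s_eps M \<epsilon> d)"
  shows "\<alpha> - 3/2 * \<epsilon> \<le> r (cut_buyer M d L) (s_eps M \<epsilon>) d"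
proof -
  let ?c = "cut_buyer M d L" and ?s = "s_eps M \<epsilon>" and ?m = "s_eps M \<epsilon> d"
  let ?R = "r ?c ?s"
  have R0: "\<forall>i\<in>{1..M}. 0 \<le> ?R i" using mechanism_nonneg[OF mech cut_buyer_in_vecs s_eps_in_vecs] by auto
  have m: "0 < ?m" using s_eps_pos[OF e(1) d] .
  have "(\<Sum>i=1..<d. ?R i) \<le> (\<Sum>i=1..M. ?R i)"
    using R0 d by (intro sum_mono2) auto
  then have P: "(\<Sum>i=1..<d. ?R i) \<le> 1"
    using mechanism_sum_le_one[OF mech cut_buyer_in_vecs[of M d L] s_eps_in_vecs[of M \<epsilon>]] by linarith
  have "\<alpha> * ?m \<le> seller_value M r ?c ?s"
  proof (rule seller_value_ge_point_mass[OF cut_buyer_in_vecs _ _ d \<open>0 \<le> \<alpha>\<close> s_eps_in_vecs])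
    have "0 < L" using zero_less_mult_pos2[of L "\<epsilon> * ?m"] L e m by simp
    then show "?c d = 0" "\<forall>i\<in>{1..M}. ?c i \<le> 2" using d unfolding cut_buyer_def by auto
    show "\<forall>i\<in>{1..M}. 0 \<le> ?s i" using s_eps_pos[OF e(1)] by (auto intro: less_imp_le)
  qed
  also have "\<dots> \<le> \<epsilon> * ?m * (\<Sum>i=1..<d. ?R i) + ?m * ?R d + \<epsilon> * ?m / 2"
    using seller_value_s_eps_le[OF e d R0] cut_buyer_tail_small[OF assms]
    unfolding seller_value_def by linarith
  also have "\<dots> \<le> ?m * (?R d + 3/2 * \<epsilon>)"
    using mult_left_mono[OF P, of "\<epsilon> * ?m"] e m by (simp add: algebra_simps)
  finally show ?thesis using m by (simp add: mult.commute)
qed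

text \<open>For \<open>d = 1\<close> the cut buyer lies in \<open>B\<^sup>0\<close>, where no induction hypothesis is
  available; here the competitive ratio at \<open>(c, s\<^sup>\<epsilon>)\<close> itself bounds the buyer value.\<close>
lemma cut_buyer_first_option:
  assumes e: "0 < \<epsilon>" "\<epsilon> < 1" and "1 \<le> M" and "0 \<le> \<alpha>"
    and L: "4 \<le> L * (\<epsilon> * s_eps M \<epsilon> 1)"
  shows "\<alpha> - 3/2 * \<epsilon> \<le> buyer_value M r (cut_buyer M 1 L) (s_eps M \<epsilon>) + r (cut_buyer M 1 L) (s_eps M \<epsilon>) 1"
proof -
  let ?c = "cut_buyer M 1 L" and ?s = "s_eps M \<epsilon>" and ?m = "s_eps M \<epsilon> 1"
  let ?R = "r ?c ?s"
  have d: "1 \<in> {1..M}" using \<open>1 \<le> M\<close> by simp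
  have R0: "\<forall>i\<in>{1..M}. 0 \<le> ?R i" using mechanism_nonneg[OF mech cut_buyer_in_vecs s_eps_in_vecs] by auto
  have m: "0 < ?m" "?m \<le> 1" using s_eps_pos[OF e(1) d] s_eps_le_one[of \<epsilon>] e by auto
  have "\<alpha> * ?m \<le> \<alpha> * OPT M ?c ?s"
    using OPT_ge[of 1 M ?c ?s] d m \<open>0 \<le> \<alpha>\<close> by (intro mult_left_mono) (auto simp: cut_buyer_def)
  also have "\<dots> \<le> gain M r ?c ?s"
    using competitive_ratio_gain_ge[OF cr cut_buyer_in_vecs s_eps_in_vecs] OPT_ge[of 1 M ?c ?s] d m
    by (auto simp: cut_buyer_def)
  also have "\<dots> \<le> buyer_value M r ?c ?s + ?m * ?R 1 + \<epsilon> * ?m / 2"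
    using seller_value_s_eps_le[OF e d R0] cut_buyer_tail_small[OF e d \<open>0 \<le> \<alpha>\<close> L]
    unfolding gain_eq_buyer_value_plus_seller_value seller_value_def by simp
  moreover have "(\<alpha> - 3/2 * \<epsilon>) * (1 - ?m) \<le> ?R 1 * (1 - ?m)"
    using cut_buyer_mass_at_cut[OF e d \<open>0 \<le> \<alpha>\<close> L] m by (intro mult_right_mono) auto
  moreover have "(\<alpha> - 3/2 * \<epsilon>) * (1 - ?m) = \<alpha> - 3/2 * \<epsilon> - \<alpha> * ?m + 3/2 * (\<epsilon> * ?m)"
    "?R 1 * (1 - ?m) = ?R 1 - ?m * ?R 1"
    by (simp_all add: field_simps)
  moreover have "0 < \<epsilon> * ?m" using e m by simp
  ultimately show ?thesis by linarith
qed

text \<open>The cut buyer values every option at most as much as \<open>b\<close> does, and option \<open>d\<close>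
  by exactly one less.\<close>
lemma buyer_value_cut_step:
  assumes d: "d \<in> {1..M}" and b: "b \<in> Bd M d" and L: "\<forall>i. - L \<le> b i" and s: "s \<in> vecs M"
  shows "buyer_value M r (cut_buyer M d L) s + r (cut_buyer M d L) s d \<le> buyer_value M r b s"
proof -
  let ?c = "cut_buyer M d L" let ?R = "r ?c s"
  have bvec: "b \<in> vecs M" using b unfolding Bd_def by auto
  have "buyer_value M r ?c s + ?R d = (\<Sum>i=1..M. ?R i * ?c i + (if i = d then ?R i else 0))"
    using d unfolding buyer_value_def by (simp add: sum.distrib)
  also have "\<dots> \<le> (\<Sum>i=1..M. ?R i * b i)"
  proof (rule sum_mono)
    fix i assume i: "i \<in> {1..M}"
    have "?c i + (if i = d then 1 else 0) \<le> b i"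
      using b i L unfolding Bd_def cut_buyer_def by auto
    then have "?R i * (?c i + (if i = d then 1 else 0)) \<le> ?R i * b i"
      using mechanism_nonneg[OF mech cut_buyer_in_vecs s] i by (intro mult_left_mono) auto
    then show "?R i * ?c i + (if i = d then ?R i else 0) \<le> ?R i * b i"
      by (simp add: algebra_simps split: if_splits)
  qed
  also have "\<dots> \<le> buyer_value M r b s" using buyer_value_ge_misreport[OF bvec cut_buyer_in_vecs s] .
  finally show ?thesis .
qed

lemma buyer_value_s_eps_ge:
  assumes e: "0 < \<epsilon>" "\<epsilon> < 1" and \<alpha>: "2 * \<epsilon> < \<alpha>"
  shows "d \<in> {1..M} \<Longrightarrow> b \<in> Bd M d \<Longrightarrow> real d * (\<alpha> - 2 * \<epsilon>) \<le> buyer_value M r b (s_eps M \<epsilon>)"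
proof (induction d arbitrary: b)
  case 0
  then show ?case by simp
next
  case (Suc k)
  let ?m = "s_eps M \<epsilon> (Suc k)"
  have m: "0 < \<epsilon> * ?m" using s_eps_pos[OF e(1) Suc.prems(1)] e by simp
  obtain L where L: "1 \<le> L" "4 \<le> L * (\<epsilon> * ?m)" "\<forall>i. - L \<le> b i"
    using vecs_large_lower_bound[OF _ m] Suc.prems(2) unfolding Bd_def by blast
  let ?c = "cut_buyer M (Suc k) L"
  have step: "buyer_value M r ?c (s_eps M \<epsilon>) + r ?c (s_eps M \<epsilon>) (Suc k) \<le> buyer_value M r b (s_eps M \<epsilon>)"
    using buyer_value_cut_step[OF Suc.prems L(3) s_eps_in_vecs] .
  have "0 \<le> \<alpha>" using e \<alpha> by simp
  show ?case
  proof (cases k)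
    case 0
    then have "\<alpha> - 3/2 * \<epsilon> \<le> buyer_value M r ?c (s_eps M \<epsilon>) + r ?c (s_eps M \<epsilon>) 1"
      using cut_buyer_first_option[OF e _ \<open>0 \<le> \<alpha>\<close>, of L] L(2) Suc.prems(1) by simp
    then show ?thesis using step e 0 by simp
  next
    case (Suc k')
    then have "real k * (\<alpha> - 2 * \<epsilon>) \<le> buyer_value M r ?c (s_eps M \<epsilon>)"
      using Suc.IH cut_buyer_in_Bd[OF Suc.prems(1) L(1)] Suc.prems(1) by auto
    then show ?thesis
      using step cut_buyer_mass_at_cut[OF e Suc.prems(1) \<open>0 \<le> \<alpha>\<close> L(2)] e
      by (simp add: algebra_simps)
  qed
qed

end

theorem lemma2:
  fixes M :: nat and r :: mechanism and \<alpha> :: real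
  assumes "M \<ge> 1"
    and "is_mechanism M r"
    and "DSIC M r"
    and "competitive_ratio M r \<alpha>"
  shows "\<forall>d\<in>{1..M}. \<forall>b\<in>Bd M d. \<forall>\<epsilon>::real. 0 < \<epsilon> \<and> \<epsilon> < 1 \<longrightarrow>
           (\<Sum>i=1..d. r b (s_eps M \<epsilon>) i) \<ge> real d * (\<alpha> - 2 * \<epsilon>)"
proof (intro ballI allI impI)
  fix d b and \<epsilon> :: real
  assume d: "d \<in> {1..M}" and b: "b \<in> Bd M d" and e: "0 < \<epsilon> \<and> \<epsilon> < 1"
  show "(\<Sum>i=1..d. r b (s_eps M \<epsilon>) i) \<ge> real d * (\<alpha> - 2 * \<epsilon>)"
  proof (cases "2 * \<epsilon> < \<alpha>")
    case True
    then show ?thesis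
      using buyer_value_s_eps_ge[OF assms(2-4) _ _ True d b]
        buyer_value_le_mass[OF assms(2) d b s_eps_in_vecs[of M \<epsilon>]] e by linarith
  next
    case False
    have "b \<in> vecs M" using b unfolding Bd_def by auto
    then have "0 \<le> (\<Sum>i=1..d. r b (s_eps M \<epsilon>) i)"
      using mechanism_nonneg[OF assms(2) _ s_eps_in_vecs] d by (intro sum_nonneg) auto
    moreover have "real d * (\<alpha> - 2 * \<epsilon>) \<le> 0" using False by (simp add: mult_nonneg_nonpos)
    ultimately show ?thesis by linarith
  qed
qed

end
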